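(* Let $(X,d)$ be a quasi-tree which is $\delta$-hyperbolic and has bottleneck constant $\Delta\geqslant 0$. Let $x_0\in X$, let $Z\subset X$ be any subset, and let $Y=\bigcup_{z\in Z}[x_0,z]$ be a union of geodesic segments (one chosen geodesic from $x_0$ to each $z\in Z$). Then there exist an $\mathbb{R}$-tree $(T,d^* )$ and a map $f:Y\to T$ such that: (1) for all $z\in Z$, the restriction of $f$ to the geodesic segment $[x_0,z]$ is an isometry; (2) for all $x,y\in Y$, $d(x,y)-2(\Delta+2\delta)\leqslant d^*(f(x),f(y))\leqslant d(x,y)$.
   Context: A quasi-tree is a geodesic metric space quasi-isometric to a simplicial tree. A geodesic metric space is $\delta$-hyperbolic if every geodesic triangle is $\delta$-slim: each point of one side lies within distance $\delta$ of the union of the other two sides. A bottleneck constant of $X$ is a number $\Delta\geqslant0$ such that for every geodesic $[x,y]$ in $X$ and every point $z\in[x,y]$, every path from $x$ to $y$ meets the closed ball $B(z,\Delta)$ (for a quasi-tree such $\Delta$ exists). An $\mathbb{R}$-tree is a metric space in which any two points are joined by a unique topological arc, which is a geodesic. *)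

theory Defs
  imports "HOL-Analysis.Analysis"
begin

definition geodesic_seg :: "'a set \<Rightarrow> ('a \<Rightarrow> 'a \<Rightarrow> real) \<Rightarrow> 'a set \<Rightarrow> 'a \<Rightarrow> 'a \<Rightarrow> bool" where
  "geodesic_seg M d S x y \<longleftrightarrow>
     (\<exists>g. g 0 = x \<and> g (d x y) = y \<and> g ` {0..d x y} \<subseteq> M \<and>
          (\<forall>s\<in>{0..d x y}. \<forall>t\<in>{0..d x y}. d (g s) (g t) = \<bar>s - t\<bar>) \<and>
          S = g ` {0..d x y})"

abbreviation geodesic_segment :: "'a::metric_space set \<Rightarrow> 'a \<Rightarrow> 'a \<Rightarrow> bool" where
  "geodesic_segment S x y \<equiv> geodesic_seg UNIV dist S x y"

definition geodesic_space :: "'a::metric_space itself \<Rightarrow> bool" where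
  "geodesic_space _ \<longleftrightarrow> (\<forall>x y::'a. \<exists>S. geodesic_segment S x y)"

definition hyperbolic :: "real \<Rightarrow> 'a::metric_space itself \<Rightarrow> bool" where
  "hyperbolic \<delta> _ \<longleftrightarrow>
     (\<forall>x y z::'a. \<forall>A B C. geodesic_segment A x y \<and> geodesic_segment B y z \<and> geodesic_segment C x z
        \<longrightarrow> (\<forall>p\<in>A. infdist p (B \<union> C) \<le> \<delta>))"

definition bottleneck_constant :: "real \<Rightarrow> 'a::metric_space itself \<Rightarrow> bool" where
  "bottleneck_constant \<Delta> _ \<longleftrightarrow> \<Delta> \<ge> 0 \<and>
     (\<forall>x y::'a. \<forall>S z. geodesic_segment S x y \<and> z \<in> S \<longrightarrow>
        (\<forall>p. path p \<and> pathstart p = x \<and> pathfinish p = y \<longrightarrow> (\<exists>t\<in>{0..1}. p t \<in> cball z \<Delta>)))"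

definition walk :: "'v set \<Rightarrow> ('v \<Rightarrow> 'v \<Rightarrow> bool) \<Rightarrow> 'v list \<Rightarrow> bool" where
  "walk V E p \<longleftrightarrow> p \<noteq> [] \<and> set p \<subseteq> V \<and> (\<forall>i. Suc i < length p \<longrightarrow> E (p ! i) (p ! Suc i))"

definition simplicial_tree :: "'v set \<Rightarrow> ('v \<Rightarrow> 'v \<Rightarrow> bool) \<Rightarrow> bool" where
  "simplicial_tree V E \<longleftrightarrow> V \<noteq> {} \<and>
     (\<forall>u v. E u v \<longrightarrow> u \<in> V \<and> v \<in> V \<and> E v u \<and> u \<noteq> v) \<and>
     (\<forall>u\<in>V. \<forall>v\<in>V. \<exists>!p. walk V E p \<and> distinct p \<and> hd p = u \<and> last p = v)"

definition graph_dist :: "'v set \<Rightarrow> ('v \<Rightarrow> 'v \<Rightarrow> bool) \<Rightarrow> 'v \<Rightarrow> 'v \<Rightarrow> real" where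
  "graph_dist V E u v = real (LEAST n. \<exists>p. walk V E p \<and> hd p = u \<and> last p = v \<and> length p = Suc n)"

text \<open>f is a quasi-isometry from the metric space 'a onto the vertex set of the tree
  (with the graph metric; this is quasi-isometric to its geometric realisation).\<close>
definition quasi_isometry_to_tree :: "('a::metric_space \<Rightarrow> 'v) \<Rightarrow> 'v set \<Rightarrow> ('v \<Rightarrow> 'v \<Rightarrow> bool) \<Rightarrow> bool" where
  "quasi_isometry_to_tree f V E \<longleftrightarrow> simplicial_tree V E \<and> range f \<subseteq> V \<and>
     (\<exists>L c. L \<ge> 1 \<and> c \<ge> 0 \<and>
        (\<forall>x y. dist x y / L - c \<le> graph_dist V E (f x) (f y) \<and>
               graph_dist V E (f x) (f y) \<le> L * dist x y + c) \<and>
        (\<forall>v\<in>V. \<exists>x. graph_dist V E v (f x) \<le> c))"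

definition R_tree :: "'b set \<Rightarrow> ('b \<Rightarrow> 'b \<Rightarrow> real) \<Rightarrow> bool" where
  "R_tree T d \<longleftrightarrow> Metric_space T d \<and>
     (\<forall>x\<in>T. \<forall>y\<in>T. x \<noteq> y \<longrightarrow>
        (\<exists>!A. \<exists>g. pathin (Metric_space.mtopology T d) g \<and> inj_on g {0..1} \<and>
                   g 0 = x \<and> g 1 = y \<and> A = g ` {0..1}) \<and>
        (\<forall>A. (\<exists>g. pathin (Metric_space.mtopology T d) g \<and> inj_on g {0..1} \<and>
                   g 0 = x \<and> g 1 = y \<and> A = g ` {0..1}) \<longrightarrow> geodesic_seg T d A x y))"

end

(*
  Write |u| for d(x0,u) and let m(u,v) be the supremum of the s such that u and v are joined by a
  path staying at distance at least s from x0.  Concatenating paths shows that m is an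
  ultrametric-type product, min (m(u,v), m(v,w)) <= m(u,w), so d*(u,v) = |u| + |v| - 2 m(u,v) is a
  pseudometric satisfying the four-point condition.  Following a geodesic gives m(u,v) >= (u|v),
  the Gromov product at x0.  Conversely, the point c of [u,v] equidistant from [u,x0] and [v,x0]
  has |c| <= (u|v) + 2 delta by slimness, and every path from u to v passes within Delta of c, so
  m(u,v) <= (u|v) + Delta + 2 delta.  Hence d - 2 (Delta + 2 delta) <= d* <= d, with equality
  along each segment [x0,z].  On Y the pseudometric d* is geodesic: from x in [x0,z] go down to
  level m(x,y) and then up [x0,w] to y in [x0,w].  Identifying points at d*-distance 0 yields a
  geodesic metric space satisfying the four-point condition, which is an R-tree.
*)
theory Submission
  imports Defs
begin

lemma geodesic_segE:
  assumes "geodesic_seg M d S x y"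
  obtains g where "g 0 = x" "g (d x y) = y" "g ` {0..d x y} \<subseteq> M" "S = g ` {0..d x y}"
    "\<And>s t. s \<in> {0..d x y} \<Longrightarrow> t \<in> {0..d x y} \<Longrightarrow> d (g s) (g t) = \<bar>s - t\<bar>"
    "\<And>s. s \<in> {0..d x y} \<Longrightarrow> d x (g s) = s" "\<And>s. s \<in> {0..d x y} \<Longrightarrow> d (g s) y = d x y - s"
proof -
  obtain g where g: "g 0 = x" "g (d x y) = y" "g ` {0..d x y} \<subseteq> M" "S = g ` {0..d x y}"
    and iso: "\<And>s t. s \<in> {0..d x y} \<Longrightarrow> t \<in> {0..d x y} \<Longrightarrow> d (g s) (g t) = \<bar>s - t\<bar>"
    using assms unfolding geodesic_seg_def by blast
  have "d x (g s) = s" "d (g s) y = d x y - s" if s: "s \<in> {0..d x y}" for s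
    using iso[OF _ s, of 0] iso[OF s, of "d x y"] s g(1,2) by auto
  with g iso show ?thesis using that by blast
qed

lemma geodesic_seg_between:
  assumes "geodesic_seg M d S x y" "p \<in> S"
  shows "d x p + d p y = d x y"
proof -
  obtain g where "S = g ` {0..d x y}"
    and "\<And>s. s \<in> {0..d x y} \<Longrightarrow> d x (g s) = s" "\<And>s. s \<in> {0..d x y} \<Longrightarrow> d (g s) y = d x y - s"
    using assms(1) by (elim geodesic_segE) blast
  then show ?thesis using assms(2) by auto
qed

lemma geodesic_seg_point_at:
  assumes "geodesic_seg M d S x y" "t \<in> {0..d x y}"
  obtains p where "p \<in> S" "p \<in> M" "d x p = t" "d p y = d x y - t"
proof -
  obtain g where "g ` {0..d x y} \<subseteq> M" "S = g ` {0..d x y}"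
    and "\<And>s. s \<in> {0..d x y} \<Longrightarrow> d x (g s) = s" "\<And>s. s \<in> {0..d x y} \<Longrightarrow> d (g s) y = d x y - s"
    using assms(1) by (elim geodesic_segE) blast
  then show ?thesis using that[of "g t"] assms(2) by blast
qed

definition gromov_product :: "('b \<Rightarrow> 'b \<Rightarrow> real) \<Rightarrow> 'b \<Rightarrow> 'b \<Rightarrow> 'b \<Rightarrow> real" where
  "gromov_product d p a b = (d p a + d p b - d a b) / 2"

lemma two_gromov_product: "2 * gromov_product d p a b = d p a + d p b - d a b"
  unfolding gromov_product_def by simp

definition four_point :: "'b set \<Rightarrow> ('b \<Rightarrow> 'b \<Rightarrow> real) \<Rightarrow> bool" where
  "four_point T d \<longleftrightarrow>
     (\<forall>x\<in>T. \<forall>y\<in>T. \<forall>z\<in>T. \<forall>w\<in>T. d x y + d z w \<le> max (d x z + d y w) (d x w + d y z))"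

lemma four_point_subset: "four_point Y d \<Longrightarrow> T \<subseteq> Y \<Longrightarrow> four_point T d"
  unfolding four_point_def by blast

context Metric_space
begin

lemma gromov_product_nonneg:
  "p \<in> M \<Longrightarrow> a \<in> M \<Longrightarrow> b \<in> M \<Longrightarrow> 0 \<le> gromov_product d p a b"
  unfolding gromov_product_def using triangle[of a p b] commute[of a p] by simp

lemma gromov_product_ultra_if_four_point:
  assumes "four_point M d" "p \<in> M" "a \<in> M" "b \<in> M" "c \<in> M"
  shows "min (gromov_product d p a c) (gromov_product d p c b) \<le> gromov_product d p a b"
proof -
  have "d a b + d p c \<le> max (d a p + d b c) (d a c + d b p)"
    using assms unfolding four_point_def by blast
  then show ?thesis
    using commute[of a p] commute[of b p] commute[of b c]
    unfolding gromov_product_def by (simp add: min_def max_def split: if_splits)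
qed

lemma connectedin_contains_between:
  assumes fp: "four_point M d" and C: "connectedin mtopology C" and "x \<in> C" "y \<in> C"
    and p: "p \<in> M" "d x p + d p y = d x y"
  shows "p \<in> C"
proof (rule ccontr)
  assume "p \<notin> C"
  have CM: "C \<subseteq> M" using connectedin_subset_topspace[OF C] by simp
  then have xM: "x \<in> M" using \<open>x \<in> C\<close> by blast
  \<comment> \<open>(u|x) at p is positive near x and zero beyond p; both level sets are open.\<close>
  define F where "F u = gromov_product d p u x" for u
  have F_nonneg: "0 \<le> F u" if "u \<in> M" for u
    unfolding F_def using gromov_product_nonneg[OF p(1) that xM] .
  define U1 where "U1 = {u \<in> M. 0 < F u}"
  define U0 where "U0 = {u \<in> M. u \<noteq> p \<and> F u = 0}"
  have "openin mtopology U1"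
    unfolding openin_mtopology
  proof (intro conjI allI impI exI)
    fix u assume u: "u \<in> U1"
    then have uM: "u \<in> M" and Fu: "0 < F u" unfolding U1_def by auto
    show "0 < F u" by (fact Fu)
    show "mball u (F u) \<subseteq> U1"
    proof
      fix v assume "v \<in> mball u (F u)"
      then have vM: "v \<in> M" and uv: "d u v < F u" by auto
      have "d p u \<le> d p v + d v u" "d v x \<le> d v u + d u x"
        using p(1) vM uM xM triangle by blast+
      then have "0 < F v"
        using uv commute[of u v] two_gromov_product[of d p u x] two_gromov_product[of d p v x]
        unfolding F_def by linarith
      then show "v \<in> U1" using vM unfolding U1_def by blast
    qed
  qed (auto simp: U1_def)
  moreover have "openin mtopology U0"
    unfolding openin_mtopology
  proof (intro conjI allI impI exI)
    fix u assume u: "u \<in> U0"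
    then have uM: "u \<in> M" and "u \<noteq> p" and Fu: "F u = 0" unfolding U0_def by auto
    then show "0 < d p u" using p(1) by simp
    show "mball u (d p u) \<subseteq> U0"
    proof
      fix v assume "v \<in> mball u (d p u)"
      then have vM: "v \<in> M" and uv: "d u v < d p u" by auto
      then have "v \<noteq> p" using commute[of u p] by auto
      have "0 < gromov_product d p u v"
        using triangle[OF p(1) vM uM] uv commute[of v u] two_gromov_product[of d p u v] by linarith
      moreover have "min (gromov_product d p u v) (gromov_product d p v x) \<le> gromov_product d p u x"
        using gromov_product_ultra_if_four_point[OF fp p(1) uM xM vM] .
      ultimately have "gromov_product d p v x \<le> 0"
        using Fu unfolding F_def by linarith
      then have "F v = 0"
        using F_nonneg[OF vM] commute[of v x] unfolding F_def by simp
      then show "v \<in> U0" using vM \<open>v \<noteq> p\<close> unfolding U0_def by simp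
    qed
  qed (auto simp: U0_def)
  moreover have "C \<subseteq> U1 \<union> U0"
    using CM F_nonneg \<open>p \<notin> C\<close> unfolding U1_def U0_def by fastforce
  moreover have "U1 \<inter> U0 \<inter> C = {}" unfolding U1_def U0_def by auto
  moreover have "x \<in> U1"
    using xM p(1) \<open>x \<in> C\<close> \<open>p \<notin> C\<close> unfolding U1_def F_def gromov_product_def by auto
  moreover have "y \<in> U0"
    using CM \<open>y \<in> C\<close> \<open>p \<notin> C\<close> p(2) commute[of x p] commute[of y x]
    unfolding U0_def F_def gromov_product_def by auto
  ultimately show False
    using connectedinD[OF C] \<open>x \<in> C\<close> \<open>y \<in> C\<close> by blast
qed

lemma pathin_image_subset: "pathin mtopology g \<Longrightarrow> g ` {0..1} \<subseteq> M"
  unfolding pathin_def using continuous_map_image_subset_topspace by fastforce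

lemma connectedin_pathin_image_interval:
  assumes "pathin mtopology g" "0 \<le> a" "b \<le> 1"
  shows "connectedin mtopology (g ` {a..b})"
proof (rule connectedin_continuous_map_image)
  show "continuous_map (top_of_set {0..1}) mtopology g" using assms(1) by (simp add: pathin_def)
  show "connectedin (top_of_set {0..1}) {a..b}"
    using assms(2,3) by (simp add: connectedin_subtopology)
qed

lemma arc_point_between:
  assumes fp: "four_point M d" and geo: "\<forall>x\<in>M. \<forall>y\<in>M. \<exists>S. geodesic_seg M d S x y"
    and g: "pathin mtopology g" "inj_on g {0..1}" and s: "s \<in> {0..1}"
  shows "d (g 0) (g s) + d (g s) (g 1) = d (g 0) (g 1)"
proof (rule ccontr)
  define x q y where "x = g 0" and "q = g s" and "y = g 1"
  assume "d (g 0) (g s) + d (g s) (g 1) \<noteq> d (g 0) (g 1)"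
  then have ne: "d x q + d q y \<noteq> d x y" unfolding x_def q_def y_def .
  have "x \<in> M" "q \<in> M" "y \<in> M"
    using pathin_image_subset[OF g(1)] s unfolding x_def q_def y_def by auto
  note pts = this
  define t0 where "t0 = gromov_product d q x y"
  have t0: "2 * t0 = d q x + d q y - d x y" unfolding t0_def by (rule two_gromov_product)
  have "0 < t0" "t0 \<le> d q x"
    using t0 ne triangle[OF pts(1,2,3)] triangle[OF pts(2,1,3)] commute[of x q] by linarith+
  then have "t0 \<in> {0..d q x}" by simp
  moreover obtain S where "geodesic_seg M d S q x" using geo pts by blast
  ultimately obtain pp where "pp \<in> S" and pp: "pp \<in> M" "d q pp = t0" "d pp x = d q x - t0"
    using geodesic_seg_point_at by metis
  \<comment> \<open>pp is the branch point of the tripod x, y, q\<close>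
  have "d pp y + d q x \<le> max (d pp q + d y x) (d pp x + d y q)"
    using fp pp(1) pts unfolding four_point_def by blast
  then have "d pp y \<le> d q y - t0"
    using pp t0 commute[of pp q] commute[of y x] commute[of y q] by (simp add: max_def)
  then have between_qy: "d q pp + d pp y = d q y"
    using triangle[OF pts(2) pp(1) pts(3)] pp(2) by linarith
  have between_xq: "d x pp + d pp q = d x q"
    using pp commute[of pp q] commute[of x pp] commute[of x q] by simp
  have "pp \<in> g ` {0..s}"
    using connectedin_contains_between[OF fp connectedin_pathin_image_interval[OF g(1)]
        _ _ pp(1) between_xq] s unfolding x_def q_def by auto
  then obtain t1 where t1: "t1 \<in> {0..s}" "pp = g t1" by blast
  have "pp \<in> g ` {s..1}"
    using connectedin_contains_between[OF fp connectedin_pathin_image_interval[OF g(1)]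
        _ _ pp(1) between_qy] s unfolding y_def q_def by auto
  then obtain t2 where t2: "t2 \<in> {s..1}" "pp = g t2" by blast
  have "t1 = t2" using inj_onD[OF g(2)] t1 t2 s by fastforce
  then have "pp = q" using t1 t2 unfolding q_def by (metis antisym atLeastAtMost_iff)
  then show False using pp(2) \<open>0 < t0\<close> pts(2) by simp
qed

lemma arc_eq_between:
  assumes fp: "four_point M d" and geo: "\<forall>x\<in>M. \<forall>y\<in>M. \<exists>S. geodesic_seg M d S x y"
    and g: "pathin mtopology g" "inj_on g {0..1}"
  shows "g ` {0..1} = {p \<in> M. d (g 0) p + d p (g 1) = d (g 0) (g 1)}"
proof
  show "g ` {0..1} \<subseteq> {p \<in> M. d (g 0) p + d p (g 1) = d (g 0) (g 1)}"
    using arc_point_between[OF fp geo g] pathin_image_subset[OF g(1)] by auto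
  show "{p \<in> M. d (g 0) p + d p (g 1) = d (g 0) (g 1)} \<subseteq> g ` {0..1}"
    using connectedin_contains_between[OF fp connectedin_path_image[OF g(1)], of "g 0" "g 1"]
    by auto
qed

lemma geodesic_seg_arc:
  assumes S: "geodesic_seg M d S x y" and "x \<noteq> y"
  obtains g where "pathin mtopology g" "inj_on g {0..1}" "g 0 = x" "g 1 = y" "S = g ` {0..1}"
proof -
  obtain \<gamma> where \<gamma>: "\<gamma> 0 = x" "\<gamma> (d x y) = y" "\<gamma> ` {0..d x y} \<subseteq> M" "S = \<gamma> ` {0..d x y}"
    and iso: "\<And>s t. s \<in> {0..d x y} \<Longrightarrow> t \<in> {0..d x y} \<Longrightarrow> d (\<gamma> s) (\<gamma> t) = \<bar>s - t\<bar>"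
    using S by (elim geodesic_segE) blast
  have "0 \<in> {0..d x y}" "d x y \<in> {0..d x y}" using nonneg[of x y] by auto
  then have "\<gamma> 0 \<in> M" "\<gamma> (d x y) \<in> M" using \<gamma>(3) by blast+
  then have "x \<in> M" "y \<in> M" using \<gamma>(1,2) by simp_all
  then have "d x y > 0" using \<open>x \<noteq> y\<close> nonneg[of x y] by fastforce
  define h where "h t = \<gamma> (d x y * t)" for t
  have scaled: "d x y * t \<in> {0..d x y}" if "t \<in> {0..1}" for t
    using that \<open>d x y > 0\<close> by (auto simp: mult_left_le)
  have hM: "h t \<in> M" if "t \<in> {0..1}" for t
    using scaled[OF that] \<gamma>(3) unfolding h_def by auto
  have h_iso: "d (h s) (h t) = d x y * \<bar>s - t\<bar>" if "s \<in> {0..1}" "t \<in> {0..1}" for s t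
    using iso[OF scaled[OF that(1)] scaled[OF that(2)]] \<open>d x y > 0\<close>
    unfolding h_def by (simp add: abs_mult flip: right_diff_distrib)
  have "pathin mtopology h"
    unfolding pathin_def continuous_map_to_metric
  proof (intro ballI allI impI)
    fix t e assume "t \<in> topspace (top_of_set {0..1::real})" and "(0::real) < e"
    then have t: "t \<in> {0..1}" by simp
    show "\<exists>U. openin (top_of_set {0..1}) U \<and> t \<in> U \<and> (\<forall>s\<in>U. h s \<in> mball (h t) e)"
    proof (intro exI conjI ballI)
      show "openin (top_of_set {0..1}) ({0..1} \<inter> ball t (e / d x y))" by (rule openin_open_Int) simp
      show "t \<in> {0..1} \<inter> ball t (e / d x y)" using t \<open>0 < e\<close> \<open>d x y > 0\<close> by simp
      fix s assume s: "s \<in> {0..1} \<inter> ball t (e / d x y)"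
      then have "d x y * \<bar>t - s\<bar> < e" using \<open>d x y > 0\<close> by (simp add: dist_real_def field_simps)
      then show "h s \<in> mball (h t) e" using h_iso[OF t, of s] s hM t by auto
    qed
  qed
  moreover have "inj_on h {0..1}"
  proof (rule inj_onI)
    fix s t assume st: "s \<in> {0..1}" "t \<in> {0..1}" and "h s = h t"
    then have "d x y * \<bar>s - t\<bar> = 0" using h_iso[OF st] zero[OF hM[OF st(1)] hM[OF st(2)]] by simp
    then show "s = t" using \<open>d x y > 0\<close> by simp
  qed
  moreover have "h ` {0..1} = \<gamma> ` {0..d x y}"
  proof -
    have "h ` {0..1} = \<gamma> ` ((*) (d x y) ` {0..1})" unfolding h_def by (simp add: image_image)
    also have "(*) (d x y) ` {0..1} = {0..d x y}" using \<open>d x y > 0\<close> by simp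
    finally show ?thesis .
  qed
  ultimately show ?thesis using that \<gamma> unfolding h_def by auto
qed

lemma R_tree_if_four_point_geodesic:
  assumes fp: "four_point M d" and geo: "\<forall>x\<in>M. \<forall>y\<in>M. \<exists>S. geodesic_seg M d S x y"
  shows "R_tree M d"
  unfolding R_tree_def
proof (intro conjI ballI impI allI Metric_space_axioms)
  fix x y assume "x \<in> M" "y \<in> M" "x \<noteq> y"
  obtain S where S: "geodesic_seg M d S x y" using geo \<open>x \<in> M\<close> \<open>y \<in> M\<close> by blast
  then obtain g where g: "pathin mtopology g" "inj_on g {0..1}" "g 0 = x" "g 1 = y" "S = g ` {0..1}"
    using \<open>x \<noteq> y\<close> by (rule geodesic_seg_arc)
  have arc_eq: "A = S"
    if A: "\<exists>g. pathin mtopology g \<and> inj_on g {0..1} \<and> g 0 = x \<and> g 1 = y \<and> A = g ` {0..1}" for A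
  proof -
    obtain g' where "pathin mtopology g'" "inj_on g' {0..1}" "g' 0 = x" "g' 1 = y" "A = g' ` {0..1}"
      using A by blast
    then show ?thesis using arc_eq_between[OF fp geo] g by simp
  qed
  show "\<exists>!A. \<exists>g. pathin mtopology g \<and> inj_on g {0..1} \<and> g 0 = x \<and> g 1 = y \<and> A = g ` {0..1}"
  proof (rule ex1I[of _ S])
    show "\<exists>g. pathin mtopology g \<and> inj_on g {0..1} \<and> g 0 = x \<and> g 1 = y \<and> S = g ` {0..1}"
      using g by blast
  qed (rule arc_eq)
  fix A assume "\<exists>g. pathin mtopology g \<and> inj_on g {0..1} \<and> g 0 = x \<and> g 1 = y \<and> A = g ` {0..1}"
  then show "geodesic_seg M d A x y" using arc_eq S by simp
qed

end

lemma R_tree_of_pseudometric: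
  fixes d :: "'b \<Rightarrow> 'b \<Rightarrow> real"
  assumes refl: "\<And>u. d u u = 0" and sym: "\<And>u v. d u v = d v u"
    and tri: "\<And>u v w. d u w \<le> d u v + d v w"
    and fp: "four_point Y d"
    and geo: "\<And>x y. x \<in> Y \<Longrightarrow> y \<in> Y \<Longrightarrow>
      \<exists>p. p ` {0..d x y} \<subseteq> Y \<and> p 0 = x \<and> d (p (d x y)) y = 0 \<and>
        (\<forall>s\<in>{0..d x y}. \<forall>t\<in>{0..d x y}. d (p s) (p t) = \<bar>s - t\<bar>)"
  obtains r where "R_tree (r ` Y) d" "\<And>u v. u \<in> Y \<Longrightarrow> v \<in> Y \<Longrightarrow> d (r u) (r v) = d u v"
proof -
  \<comment> \<open>The metric quotient of Y is realised inside Y by a choice of representatives r.\<close>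
  define r where "r u = (SOME w. w \<in> Y \<and> d u w = 0)" for u
  have r: "r u \<in> Y" "d u (r u) = 0" if "u \<in> Y" for u
    using someI[of "\<lambda>w. w \<in> Y \<and> d u w = 0" u] that refl unfolding r_def by auto
  have same_dist: "d u w = d v w" if "d u v = 0" for u v w
    using tri[of u w v] tri[of v w u] sym[of u v] that by linarith
  have r_eq: "r u = r v" if "d u v = 0" for u v
    unfolding r_def using same_dist[OF that] by simp
  have r_dist: "d (r u) (r v) = d u v" if "u \<in> Y" "v \<in> Y" for u v
    using same_dist[of "r u" u "r v"] same_dist[of "r v" v u] r[OF that(1)] r[OF that(2)] sym
    by metis
  have r_idem: "r (r u) = r u" if "u \<in> Y" for u
    using r_eq r[OF that] sym by metis
  have "Metric_space (r ` Y) d"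
  proof
    show "0 \<le> d x y" for x y using tri[of x x y] refl[of x] sym[of x y] by linarith
    show "(d x y = 0) = (x = y)" if "x \<in> r ` Y" "y \<in> r ` Y" for x y
      using that r_eq r_idem refl by (metis imageE)
    show "d x y = d y x" for x y by (rule sym)
    show "d x z \<le> d x y + d y z" for x y z by (rule tri)
  qed
  moreover have "four_point (r ` Y) d"
    using four_point_subset[OF fp] r by blast
  moreover have "\<exists>S. geodesic_seg (r ` Y) d S x y" if "x \<in> r ` Y" "y \<in> r ` Y" for x y
  proof -
    have "x \<in> Y" "y \<in> Y" "r x = x" "r y = y" using that r r_idem by auto
    then obtain p where p: "p ` {0..d x y} \<subseteq> Y" "p 0 = x" "d (p (d x y)) y = 0"
      and iso: "\<forall>s\<in>{0..d x y}. \<forall>t\<in>{0..d x y}. d (p s) (p t) = \<bar>s - t\<bar>"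
      using geo by blast
    have "geodesic_seg (r ` Y) d ((r \<circ> p) ` {0..d x y}) x y"
      unfolding geodesic_seg_def
    proof (intro exI conjI)
      show "(r \<circ> p) 0 = x" using p(2) \<open>r x = x\<close> by simp
      show "(r \<circ> p) (d x y) = y" using r_eq[OF p(3)] \<open>r y = y\<close> by simp
      show "(r \<circ> p) ` {0..d x y} \<subseteq> r ` Y" using p(1) by (auto simp: image_comp[symmetric])
      show "\<forall>s\<in>{0..d x y}. \<forall>t\<in>{0..d x y}. d ((r \<circ> p) s) ((r \<circ> p) t) = \<bar>s - t\<bar>"
        using iso p(1) r_dist by (simp add: image_subset_iff)
    qed simp
    then show ?thesis by blast
  qed
  ultimately have "R_tree (r ` Y) d"
    using Metric_space.R_tree_if_four_point_geodesic by blast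
  with r_dist show ?thesis using that by blast
qed

lemma ultrametric_four_point:
  fixes m :: "'b \<Rightarrow> 'b \<Rightarrow> real"
  assumes ultra: "\<And>u v w. min (m u v) (m v w) \<le> m u w" and sym: "\<And>u v. m u v = m v u"
  shows "min (m x z + m y w) (m x w + m y z) \<le> m x y + m z w"
proof -
  have "min (m x z) (m z y) \<le> m x y" "min (m x w) (m w y) \<le> m x y"
       "min (m z x) (m x w) \<le> m z w" "min (m z y) (m y w) \<le> m z w"
       "min (m x y) (m y z) \<le> m x z" "min (m x w) (m w z) \<le> m x z"
       "min (m y x) (m x w) \<le> m y w" "min (m y z) (m z w) \<le> m y w"
       "min (m x y) (m y w) \<le> m x w" "min (m x z) (m z w) \<le> m x w"
       "min (m y x) (m x z) \<le> m y z" "min (m y w) (m w z) \<le> m y z"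
    using ultra by blast+
  moreover have "m z y = m y z" "m w y = m y w" "m z x = m x z" "m w z = m z w" "m y x = m x y"
    using sym by blast+
  ultimately show ?thesis by (smt (verit))
qed

lemma ultrametric_cross_eq:
  fixes m :: "'b \<Rightarrow> 'b \<Rightarrow> real"
  assumes ultra: "\<And>u v w. min (m u v) (m v w) \<le> m u w" and sym: "\<And>u v. m u v = m v u"
    and "m a c \<le> m a b" "m a c \<le> m c d" "m b d \<le> m a b" "m b d \<le> m c d"
  shows "m b d = m a c"
proof -
  have "min (m a c) (m c d) \<le> m a d" "min (m b a) (m a d) \<le> m b d"
    "min (m a b) (m b c) \<le> m a c" "min (m b d) (m d c) \<le> m b c"
    using ultra by blast+
  then show ?thesis using assms(3-) sym[of b a] sym[of d c] by (simp add: min_def split: if_splits)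
qed

lemma continuous_on_isometric:
  fixes g :: "real \<Rightarrow> 'a::metric_space"
  assumes "\<And>s t. s \<in> A \<Longrightarrow> t \<in> A \<Longrightarrow> dist (g s) (g t) = \<bar>s - t\<bar>"
  shows "continuous_on A g"
  by (rule lipschitz_on_continuous_on[of 1]) (auto intro!: lipschitz_onI simp: assms dist_real_def)

lemma geodesic_segment_path:
  assumes "geodesic_segment S u v"
  obtains p where "path p" "pathstart p = u" "pathfinish p = v" "path_image p = S"
proof -
  obtain \<gamma> where \<gamma>: "\<gamma> 0 = u" "\<gamma> (dist u v) = v" "S = \<gamma> ` {0..dist u v}"
    and iso: "\<And>s t. s \<in> {0..dist u v} \<Longrightarrow> t \<in> {0..dist u v} \<Longrightarrow> dist (\<gamma> s) (\<gamma> t) = \<bar>s - t\<bar>"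
    using assms by (elim geodesic_segE) blast
  define p where "p t = \<gamma> (dist u v * t)" for t
  have scale: "(*) (dist u v) ` {0..1} = {0..dist u v}"
    by (cases "dist u v = 0") force+
  have "continuous_on {0..1} (\<gamma> \<circ> (*) (dist u v))"
    using continuous_on_isometric[of "{0..dist u v}", OF iso] scale
    by (intro continuous_on_compose continuous_intros) simp
  then have "path p" unfolding path_def p_def comp_def .
  moreover have "path_image p = S"
    unfolding path_image_def p_def \<gamma>(3) scale[symmetric] by (simp add: image_image)
  ultimately show ?thesis using that \<gamma>(1,2) by (simp add: pathstart_def pathfinish_def p_def)
qed

lemma geodesic_segment_from_base_dist:
  assumes "geodesic_segment S x0 z" "u \<in> S" "v \<in> S"
  shows "dist u v = \<bar>dist x0 u - dist x0 v\<bar>"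
proof -
  obtain \<gamma> where "S = \<gamma> ` {0..dist x0 z}"
    and "\<And>s t. s \<in> {0..dist x0 z} \<Longrightarrow> t \<in> {0..dist x0 z} \<Longrightarrow> dist (\<gamma> s) (\<gamma> t) = \<bar>s - t\<bar>"
    and "\<And>s. s \<in> {0..dist x0 z} \<Longrightarrow> dist x0 (\<gamma> s) = s"
    using assms(1) by (elim geodesic_segE) blast
  then show ?thesis using assms(2,3) by auto
qed

lemma geodesic_segment_start: "geodesic_segment S x y \<Longrightarrow> x \<in> S"
  unfolding geodesic_seg_def by force

lemma gromov_product_dist_nonneg: "0 \<le> gromov_product dist p (a::'a::metric_space) b"
  using Metric_space.gromov_product_nonneg[OF Met_TC.Metric_space_axioms] by simp

lemma infdist_geodesic_segment_ge:
  assumes "geodesic_segment S u v"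
  shows "gromov_product dist c u v \<le> infdist c S"
proof -
  have "S \<noteq> {}" using geodesic_segment_start[OF assms] by blast
  then show ?thesis
    unfolding infdist_notempty[OF \<open>S \<noteq> {}\<close>]
  proof (rule cINF_greatest)
    fix q assume "q \<in> S"
    have "dist u v = dist u q + dist q v" using geodesic_seg_between[OF assms \<open>q \<in> S\<close>] by simp
    moreover have "dist c u \<le> dist c q + dist q u" "dist c v \<le> dist c q + dist q v"
      by (simp_all add: dist_triangle)
    ultimately show "gromov_product dist c u v \<le> dist c q"
      using two_gromov_product[of dist c u v] dist_commute[of q u] by linarith
  qed
qed

lemma geodesic_segment_near_base:
  fixes x0 :: "'a::metric_space"
  assumes geod: "geodesic_space TYPE('a)" and hyp: "hyperbolic \<delta> TYPE('a)"
    and S: "geodesic_segment S u v"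
  obtains c where "c \<in> S" "dist x0 c \<le> gromov_product dist x0 u v + 2 * \<delta>"
proof -
  obtain \<gamma> where \<gamma>: "\<gamma> 0 = u" "\<gamma> (dist u v) = v" "S = \<gamma> ` {0..dist u v}"
    and iso: "\<And>s t. s \<in> {0..dist u v} \<Longrightarrow> t \<in> {0..dist u v} \<Longrightarrow> dist (\<gamma> s) (\<gamma> t) = \<bar>s - t\<bar>"
    using S by (elim geodesic_segE) blast
  obtain Su Sv where Su: "geodesic_segment Su u x0" and Sv: "geodesic_segment Sv v x0"
    using geod unfolding geodesic_space_def by blast
  \<comment> \<open>c is a point of S equidistant from the two other sides of the triangle\<close>
  define \<phi> where "\<phi> r = infdist (\<gamma> r) Su - infdist (\<gamma> r) Sv" for r
  have "continuous_on {0..dist u v} \<phi>"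
    unfolding \<phi>_def using continuous_on_isometric[of "{0..dist u v}", OF iso]
    by (intro continuous_intros)
  moreover have "\<phi> 0 \<le> 0" "0 \<le> \<phi> (dist u v)"
    using \<gamma>(1,2) geodesic_segment_start[OF Su] geodesic_segment_start[OF Sv]
    unfolding \<phi>_def by (simp_all add: infdist_nonneg)
  ultimately obtain r where r: "r \<in> {0..dist u v}" "\<phi> r = 0"
    using IVT'[of \<phi> 0 0 "dist u v"] by auto
  define c where "c = \<gamma> r"
  have "c \<in> S" using r \<gamma>(3) unfolding c_def by blast
  then have "infdist c (Sv \<union> Su) \<le> \<delta>"
    using hyp S Sv Su unfolding hyperbolic_def by blast
  moreover have "infdist c (Sv \<union> Su) = min (infdist c Sv) (infdist c Su)"
    using geodesic_segment_start[OF Su] geodesic_segment_start[OF Sv] by (intro infdist_Un_min) auto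
  moreover have "infdist c Su = infdist c Sv" using r(2) unfolding \<phi>_def c_def by simp
  ultimately have "infdist c Su \<le> \<delta>" "infdist c Sv \<le> \<delta>" by simp_all
  then have "gromov_product dist c u x0 \<le> \<delta>" "gromov_product dist c v x0 \<le> \<delta>"
    using infdist_geodesic_segment_ge[OF Su, of c] infdist_geodesic_segment_ge[OF Sv, of c]
    by simp_all
  moreover have "dist u c + dist c v = dist u v" by (rule geodesic_seg_between[OF S \<open>c \<in> S\<close>])
  ultimately have "dist x0 c \<le> gromov_product dist x0 u v + 2 * \<delta>"
    using two_gromov_product[of dist c u x0] two_gromov_product[of dist c v x0]
      two_gromov_product[of dist x0 u v]
      dist_commute[of x0 c] dist_commute[of u c] dist_commute[of x0 u] dist_commute[of x0 v]
    by linarith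
  then show ?thesis using that \<open>c \<in> S\<close> by blast
qed

definition joinable_outside :: "'a::metric_space \<Rightarrow> real \<Rightarrow> 'a \<Rightarrow> 'a \<Rightarrow> bool" where
  "joinable_outside x0 s u v \<longleftrightarrow>
     (\<exists>p. path p \<and> pathstart p = u \<and> pathfinish p = v \<and> (\<forall>q\<in>path_image p. s \<le> dist x0 q))"

lemma joinable_outside_le_dist:
  "joinable_outside x0 s u v \<Longrightarrow> s \<le> dist x0 u \<and> s \<le> dist x0 v"
  unfolding joinable_outside_def by (metis pathstart_in_path_image pathfinish_in_path_image)

lemma joinable_outside_mono: "joinable_outside x0 s u v \<Longrightarrow> s' \<le> s \<Longrightarrow> joinable_outside x0 s' u v"
  unfolding joinable_outside_def by (blast intro: order_trans)

lemma joinable_outside_commute: "joinable_outside x0 s u v \<Longrightarrow> joinable_outside x0 s v u"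
  unfolding joinable_outside_def
  by (metis path_image_reversepath path_reversepath pathfinish_reversepath pathstart_reversepath)

lemma joinable_outside_trans:
  assumes "joinable_outside x0 s u v" "joinable_outside x0 s v w"
  shows "joinable_outside x0 s u w"
proof -
  obtain p q where "path p" "pathstart p = u" "pathfinish p = v" "\<forall>x\<in>path_image p. s \<le> dist x0 x"
    and "path q" "pathstart q = v" "pathfinish q = w" "\<forall>x\<in>path_image q. s \<le> dist x0 x"
    using assms unfolding joinable_outside_def by blast
  then show ?thesis
    unfolding joinable_outside_def using path_image_join_subset[of p q]
    by (intro exI[of _ "p +++ q"]) auto
qed

lemma joinable_outside_gromov_product:
  assumes "geodesic_segment S u v"
  shows "joinable_outside x0 (gromov_product dist x0 u v) u v"
proof -
  obtain p where p: "path p" "pathstart p = u" "pathfinish p = v" "path_image p = S"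
    using assms by (rule geodesic_segment_path)
  have "gromov_product dist x0 u v \<le> dist x0 q" if "q \<in> S" for q
  proof -
    have "dist u q + dist q v = dist u v" by (rule geodesic_seg_between[OF assms that])
    moreover have "dist x0 u \<le> dist x0 q + dist q u" "dist x0 v \<le> dist x0 q + dist q v"
      by (simp_all add: dist_triangle)
    ultimately show ?thesis
      using two_gromov_product[of dist x0 u v] dist_commute[of q u] by linarith
  qed
  then show ?thesis unfolding joinable_outside_def using p by blast
qed

lemma joinable_outside_le_gromov_product:
  fixes x0 :: "'a::metric_space"
  assumes geod: "geodesic_space TYPE('a)" and hyp: "hyperbolic \<delta> TYPE('a)"
    and bneck: "bottleneck_constant \<Delta> TYPE('a)" and "joinable_outside x0 s u v"
  shows "s \<le> gromov_product dist x0 u v + \<Delta> + 2 * \<delta>"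
proof -
  obtain S where S: "geodesic_segment S u v" using geod unfolding geodesic_space_def by blast
  obtain c where "c \<in> S" and c: "dist x0 c \<le> gromov_product dist x0 u v + 2 * \<delta>"
    using geodesic_segment_near_base[OF geod hyp S] by blast
  obtain p where "path p" "pathstart p = u" "pathfinish p = v"
    and far: "\<forall>q\<in>path_image p. s \<le> dist x0 q"
    using \<open>joinable_outside x0 s u v\<close> unfolding joinable_outside_def by blast
  then obtain t where "t \<in> {0..1}" "p t \<in> cball c \<Delta>"
    using bneck S \<open>c \<in> S\<close> unfolding bottleneck_constant_def by blast
  then have "s \<le> dist x0 (p t)" "dist c (p t) \<le> \<Delta>" using far by (auto simp: path_image_def)
  then show ?thesis using c dist_triangle[of x0 "p t" c] by linarith
qed

definition path_gromov_product :: "'a::metric_space \<Rightarrow> 'a \<Rightarrow> 'a \<Rightarrow> real" where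
  "path_gromov_product x0 u v = Sup {s. joinable_outside x0 s u v}"

definition tree_dist :: "'a::metric_space \<Rightarrow> 'a \<Rightarrow> 'a \<Rightarrow> real" where
  "tree_dist x0 u v = dist x0 u + dist x0 v - 2 * path_gromov_product x0 u v"

lemma le_path_gromov_product:
  "joinable_outside x0 s u v \<Longrightarrow> s \<le> path_gromov_product x0 u v"
  unfolding path_gromov_product_def using joinable_outside_le_dist
  by (intro cSup_upper bdd_aboveI[of _ "dist x0 u"]) auto

lemma path_gromov_product_commute: "path_gromov_product x0 u v = path_gromov_product x0 v u"
  unfolding path_gromov_product_def using joinable_outside_commute by metis

lemma tree_dist_commute: "tree_dist x0 u v = tree_dist x0 v u"
  unfolding tree_dist_def using path_gromov_product_commute by (metis add.commute)

context
  fixes x0 :: "'a::metric_space"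
  assumes geod: "geodesic_space TYPE('a)"
begin

lemma joinable_outside_exists: "\<exists>s. joinable_outside x0 s u v"
  using geod joinable_outside_gromov_product unfolding geodesic_space_def by blast

lemma path_gromov_product_le:
  "(\<And>s. joinable_outside x0 s u v \<Longrightarrow> s \<le> b) \<Longrightarrow> path_gromov_product x0 u v \<le> b"
  unfolding path_gromov_product_def using joinable_outside_exists by (intro cSup_least) auto

lemma joinable_outside_less_path_gromov_product:
  assumes "s < path_gromov_product x0 u v"
  shows "joinable_outside x0 s u v"
proof -
  have "\<not> path_gromov_product x0 u v \<le> s" using assms by simp
  then obtain s' where "joinable_outside x0 s' u v" "s < s'"
    using path_gromov_product_le[of u v s] by force
  then show ?thesis using joinable_outside_mono by fastforce
qed

lemma gromov_product_le_path_gromov_product: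
  "gromov_product dist x0 u v \<le> path_gromov_product x0 u v"
  using geod joinable_outside_gromov_product le_path_gromov_product
  unfolding geodesic_space_def by blast

lemma path_gromov_product_le_dist:
  "path_gromov_product x0 u v \<le> dist x0 u" "path_gromov_product x0 u v \<le> dist x0 v"
  using path_gromov_product_le joinable_outside_le_dist by blast+

lemma path_gromov_product_le_gromov_product:
  assumes "hyperbolic \<delta> TYPE('a)" "bottleneck_constant \<Delta> TYPE('a)"
  shows "path_gromov_product x0 u v \<le> gromov_product dist x0 u v + \<Delta> + 2 * \<delta>"
  using path_gromov_product_le joinable_outside_le_gromov_product[OF geod assms] by blast

lemma path_gromov_product_ultra:
  "min (path_gromov_product x0 u v) (path_gromov_product x0 v w) \<le> path_gromov_product x0 u w"
proof (rule dense_le)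
  fix s assume "s < min (path_gromov_product x0 u v) (path_gromov_product x0 v w)"
  then have "joinable_outside x0 s u v" "joinable_outside x0 s v w"
    using joinable_outside_less_path_gromov_product by simp_all
  then show "s \<le> path_gromov_product x0 u w"
    using joinable_outside_trans le_path_gromov_product by blast
qed

lemma tree_dist_le_dist: "tree_dist x0 u v \<le> dist u v"
  using gromov_product_le_path_gromov_product[of u v] two_gromov_product[of dist x0 u v]
  unfolding tree_dist_def by linarith

lemma dist_le_tree_dist:
  assumes "hyperbolic \<delta> TYPE('a)" "bottleneck_constant \<Delta> TYPE('a)"
  shows "dist u v - 2 * (\<Delta> + 2 * \<delta>) \<le> tree_dist x0 u v"
  using path_gromov_product_le_gromov_product[OF assms, of u v] two_gromov_product[of dist x0 u v]
  unfolding tree_dist_def distrib_left by linarith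

lemma tree_dist_self: "tree_dist x0 u u = 0"
  using tree_dist_le_dist[of u u] path_gromov_product_le_dist[of u u]
  unfolding tree_dist_def by simp

lemma tree_dist_triangle: "tree_dist x0 u w \<le> tree_dist x0 u v + tree_dist x0 v w"
  using path_gromov_product_ultra[of u v w]
    path_gromov_product_le_dist[of u v] path_gromov_product_le_dist[of v w]
  unfolding tree_dist_def by (simp add: min_def split: if_splits)

lemma four_point_tree_dist: "four_point UNIV (tree_dist x0)"
  unfolding four_point_def
proof (intro ballI)
  fix x y z w :: 'a
  have "min (path_gromov_product x0 x z + path_gromov_product x0 y w)
            (path_gromov_product x0 x w + path_gromov_product x0 y z)
        \<le> path_gromov_product x0 x y + path_gromov_product x0 z w"
    using path_gromov_product_ultra path_gromov_product_commute
    by (rule ultrametric_four_point)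
  then show "tree_dist x0 x y + tree_dist x0 z w
             \<le> max (tree_dist x0 x z + tree_dist x0 y w) (tree_dist x0 x w + tree_dist x0 y z)"
    unfolding tree_dist_def by (simp add: min_def max_def split: if_splits)
qed

lemma path_gromov_product_radial:
  assumes "dist u v = \<bar>dist x0 u - dist x0 v\<bar>"
  shows "path_gromov_product x0 u v = min (dist x0 u) (dist x0 v)"
  using gromov_product_le_path_gromov_product[of u v] two_gromov_product[of dist x0 u v]
    path_gromov_product_le_dist[of u v] assms
  by (simp add: min_def abs_if split: if_splits)

lemma tree_dist_radial:
  assumes "dist u v = \<bar>dist x0 u - dist x0 v\<bar>"
  shows "tree_dist x0 u v = dist u v"
  using path_gromov_product_radial[OF assms] assms
  unfolding tree_dist_def by (simp add: min_def abs_if)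

end

lemma path_gromov_product_across_radial_segments:
  fixes x0 :: "'a::metric_space"
  assumes geod: "geodesic_space TYPE('a)"
    and Sz: "geodesic_segment Sz x0 z" and Sw: "geodesic_segment Sw x0 w"
    and "x \<in> Sz" "u \<in> Sz" "y \<in> Sw" "v \<in> Sw"
    and "path_gromov_product x0 x y \<le> dist x0 u" "dist x0 u \<le> dist x0 x"
    and "path_gromov_product x0 x y \<le> dist x0 v" "dist x0 v \<le> dist x0 y"
  shows "path_gromov_product x0 u v = path_gromov_product x0 x y"
proof (rule ultrametric_cross_eq[of "path_gromov_product x0"])
  show "min (path_gromov_product x0 a b) (path_gromov_product x0 b c) \<le> path_gromov_product x0 a c"
    for a b c by (rule path_gromov_product_ultra[OF geod])
  show "path_gromov_product x0 a b = path_gromov_product x0 b a" for a b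
    by (rule path_gromov_product_commute)
  have "path_gromov_product x0 x u = dist x0 u"
    using path_gromov_product_radial[OF geod geodesic_segment_from_base_dist[OF Sz]] assms(4,5,9)
    by simp
  moreover have "path_gromov_product x0 y v = dist x0 v"
    using path_gromov_product_radial[OF geod geodesic_segment_from_base_dist[OF Sw]] assms(6,7,11)
    by simp
  ultimately show "path_gromov_product x0 x y \<le> path_gromov_product x0 x u"
    "path_gromov_product x0 x y \<le> path_gromov_product x0 y v"
    "path_gromov_product x0 u v \<le> path_gromov_product x0 x u"
    "path_gromov_product x0 u v \<le> path_gromov_product x0 y v"
    using assms(8,10) path_gromov_product_le_dist[OF geod, of x0 u v] by simp_all
qed

lemma tree_dist_geodesic_across_radial_segments:
  fixes x0 :: "'a::metric_space"
  assumes geod: "geodesic_space TYPE('a)"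
    and Sz: "geodesic_segment Sz x0 z" and Sw: "geodesic_segment Sw x0 w" and "x \<in> Sz" "y \<in> Sw"
  defines "D \<equiv> tree_dist x0 x y"
  obtains p where "p ` {0..D} \<subseteq> Sz \<union> Sw" "p 0 = x" "tree_dist x0 (p D) y = 0"
    "\<And>s t. s \<in> {0..D} \<Longrightarrow> t \<in> {0..D} \<Longrightarrow> tree_dist x0 (p s) (p t) = \<bar>s - t\<bar>"
proof -
  obtain \<gamma>z where \<gamma>z: "Sz = \<gamma>z ` {0..dist x0 z}"
    and iso_z: "\<And>s t. s \<in> {0..dist x0 z} \<Longrightarrow> t \<in> {0..dist x0 z} \<Longrightarrow> dist (\<gamma>z s) (\<gamma>z t) = \<bar>s - t\<bar>"
    and level_z: "\<And>s. s \<in> {0..dist x0 z} \<Longrightarrow> dist x0 (\<gamma>z s) = s"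
    using Sz by (elim geodesic_segE) blast
  obtain \<gamma>w where \<gamma>w: "Sw = \<gamma>w ` {0..dist x0 w}"
    and iso_w: "\<And>s t. s \<in> {0..dist x0 w} \<Longrightarrow> t \<in> {0..dist x0 w} \<Longrightarrow> dist (\<gamma>w s) (\<gamma>w t) = \<bar>s - t\<bar>"
    and level_w: "\<And>s. s \<in> {0..dist x0 w} \<Longrightarrow> dist x0 (\<gamma>w s) = s"
    using Sw by (elim geodesic_segE) blast
  define a b \<mu> where "a = dist x0 x" and "b = dist x0 y" and "\<mu> = path_gromov_product x0 x y"
  have D: "D = a + b - 2 * \<mu>" unfolding D_def a_def b_def \<mu>_def tree_dist_def ..
  have x: "x = \<gamma>z a" "a \<in> {0..dist x0 z}" using \<open>x \<in> Sz\<close> level_z unfolding \<gamma>z a_def by auto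
  have y: "y = \<gamma>w b" "b \<in> {0..dist x0 w}" using \<open>y \<in> Sw\<close> level_w unfolding \<gamma>w b_def by auto
  have \<mu>: "0 \<le> \<mu>" "\<mu> \<le> a" "\<mu> \<le> b"
    using gromov_product_dist_nonneg[of x0 x y]
      gromov_product_le_path_gromov_product[OF geod, of x0 x y]
      path_gromov_product_le_dist[OF geod, of x0 x y] unfolding a_def b_def \<mu>_def by linarith+
  have along_z: "tree_dist x0 (\<gamma>z s) (\<gamma>z t) = \<bar>s - t\<bar>"
    if "s \<in> {0..dist x0 z}" "t \<in> {0..dist x0 z}" for s t
    using tree_dist_radial[OF geod] iso_z[OF that] level_z[OF that(1)] level_z[OF that(2)] by simp
  have along_w: "tree_dist x0 (\<gamma>w s) (\<gamma>w t) = \<bar>s - t\<bar>"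
    if "s \<in> {0..dist x0 w}" "t \<in> {0..dist x0 w}" for s t
    using tree_dist_radial[OF geod] iso_w[OF that] level_w[OF that(1)] level_w[OF that(2)] by simp
  have across: "tree_dist x0 (\<gamma>z \<sigma>) (\<gamma>w \<tau>) = \<sigma> + \<tau> - 2 * \<mu>" if "\<sigma> \<in> {\<mu>..a}" "\<tau> \<in> {\<mu>..b}" for \<sigma> \<tau>
  proof -
    have "\<sigma> \<in> {0..dist x0 z}" "\<tau> \<in> {0..dist x0 w}" using that x(2) y(2) \<mu>(1) by auto
    then have "\<gamma>z \<sigma> \<in> Sz" "\<gamma>w \<tau> \<in> Sw" "dist x0 (\<gamma>z \<sigma>) = \<sigma>" "dist x0 (\<gamma>w \<tau>) = \<tau>"
      using level_z level_w unfolding \<gamma>z \<gamma>w by auto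
    then show ?thesis
      using path_gromov_product_across_radial_segments[OF geod Sz Sw \<open>x \<in> Sz\<close> _ \<open>y \<in> Sw\<close>,
          of "\<gamma>z \<sigma>" "\<gamma>w \<tau>"]
        that unfolding tree_dist_def a_def b_def \<mu>_def by auto
  qed
  \<comment> \<open>Descend along Sz from x to level \<mu>, then climb along Sw to y.\<close>
  define p where "p t = (if t \<le> a - \<mu> then \<gamma>z (a - t) else \<gamma>w (t - a + 2 * \<mu>))" for t
  show ?thesis
  proof
    show "p ` {0..D} \<subseteq> Sz \<union> Sw"
      using x(2) y(2) \<mu> unfolding p_def D \<gamma>z \<gamma>w by auto
    show "p 0 = x" using x(1) \<mu>(2) unfolding p_def by simp
    show "tree_dist x0 (p D) y = 0"
    proof (cases "D \<le> a - \<mu>")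
      case True
      then have "b = \<mu>" "p D = \<gamma>z \<mu>" using \<mu>(3) unfolding D p_def by auto
      then show ?thesis using across[of \<mu> b] y(1) \<mu> by simp
    next
      case False
      then show ?thesis using y(1) tree_dist_self[OF geod] unfolding p_def D by simp
    qed
    show "tree_dist x0 (p s) (p t) = \<bar>s - t\<bar>" if "s \<in> {0..D}" "t \<in> {0..D}" for s t
      using that
    proof (induction s t rule: linorder_wlog)
      case (le s t)
      consider "t \<le> a - \<mu>" | "s \<le> a - \<mu>" "\<not> t \<le> a - \<mu>" | "\<not> s \<le> a - \<mu>"
        using le(1) by linarith
      then show ?case
      proof cases
        case 1
        then show ?thesis using le along_z[of "a - s" "a - t"] x(2) \<mu> unfolding p_def by auto
      next
        case 2
        then show ?thesis using le across[of "a - s" "t - a + 2 * \<mu>"] \<mu> unfolding p_def D by auto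
      next
        case 3
        then show ?thesis
          using le along_w[of "s - a + 2 * \<mu>" "t - a + 2 * \<mu>"] y(2) \<mu> unfolding p_def D by auto
      qed
    qed (simp add: tree_dist_commute abs_minus_commute)
  qed
qed

lemma R_tree_quotient_of_radial_segments:
  fixes x0 :: "'a::metric_space"
  assumes geod: "geodesic_space TYPE('a)" and segs: "\<forall>z\<in>Z. geodesic_segment (G z) x0 z"
  defines "Y \<equiv> \<Union>z\<in>Z. G z"
  obtains r where "R_tree (r ` Y) (tree_dist x0)"
    "\<And>u v. u \<in> Y \<Longrightarrow> v \<in> Y \<Longrightarrow> tree_dist x0 (r u) (r v) = tree_dist x0 u v"
proof (rule R_tree_of_pseudometric)
  show "tree_dist x0 u u = 0" for u by (rule tree_dist_self[OF geod])
  show "tree_dist x0 u v = tree_dist x0 v u" for u v by (rule tree_dist_commute)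
  show "tree_dist x0 u w \<le> tree_dist x0 u v + tree_dist x0 v w" for u v w
    by (rule tree_dist_triangle[OF geod])
  show "four_point Y (tree_dist x0)"
    by (rule four_point_subset[OF four_point_tree_dist[OF geod] subset_UNIV])
  fix x y assume "x \<in> Y" "y \<in> Y"
  then obtain z w where z: "z \<in> Z" "x \<in> G z" and w: "w \<in> Z" "y \<in> G w"
    unfolding Y_def by blast
  then have "geodesic_segment (G z) x0 z" "geodesic_segment (G w) x0 w" using segs by blast+
  then obtain p where "p ` {0..tree_dist x0 x y} \<subseteq> G z \<union> G w" and p: "p 0 = x"
    "tree_dist x0 (p (tree_dist x0 x y)) y = 0"
    "\<And>s t. s \<in> {0..tree_dist x0 x y} \<Longrightarrow> t \<in> {0..tree_dist x0 x y} \<Longrightarrow>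
      tree_dist x0 (p s) (p t) = \<bar>s - t\<bar>"
    using z(2) w(2) by (rule tree_dist_geodesic_across_radial_segments[OF geod]) blast
  moreover have "G z \<union> G w \<subseteq> Y" using z(1) w(1) unfolding Y_def by blast
  ultimately have "p ` {0..tree_dist x0 x y} \<subseteq> Y" by blast
  with p show "\<exists>p. p ` {0..tree_dist x0 x y} \<subseteq> Y \<and> p 0 = x \<and>
      tree_dist x0 (p (tree_dist x0 x y)) y = 0 \<and>
      (\<forall>s\<in>{0..tree_dist x0 x y}. \<forall>t\<in>{0..tree_dist x0 x y}. tree_dist x0 (p s) (p t) = \<bar>s - t\<bar>)"
    by (intro exI[of _ p]) simp
qed (rule that)

theorem proposition5p1:
  fixes \<delta> \<Delta> :: real and x0 :: "'a::metric_space" and Z :: "'a set"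
    and G :: "'a \<Rightarrow> 'a set" and q :: "'a \<Rightarrow> 'v" and V :: "'v set" and E :: "'v \<Rightarrow> 'v \<Rightarrow> bool"
  assumes geod: "geodesic_space TYPE('a)"
    and qtree: "quasi_isometry_to_tree q V E"
    and hyp: "hyperbolic \<delta> TYPE('a)"
    and bneck: "bottleneck_constant \<Delta> TYPE('a)"
    and segs: "\<forall>z\<in>Z. geodesic_segment (G z) x0 z"
  shows "\<exists>(T :: 'a set) (dT :: 'a \<Rightarrow> 'a \<Rightarrow> real) (f :: 'a \<Rightarrow> 'a).
           R_tree T dT \<and> f ` (\<Union>z\<in>Z. G z) \<subseteq> T \<and>
           (\<forall>z\<in>Z. \<forall>x\<in>G z. \<forall>y\<in>G z. dT (f x) (f y) = dist x y) \<and>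
           (\<forall>x\<in>(\<Union>z\<in>Z. G z). \<forall>y\<in>(\<Union>z\<in>Z. G z).
              dist x y - 2 * (\<Delta> + 2 * \<delta>) \<le> dT (f x) (f y) \<and> dT (f x) (f y) \<le> dist x y)"
proof -
  let ?Y = "\<Union>z\<in>Z. G z"
  obtain r where "R_tree (r ` ?Y) (tree_dist x0)"
    and r: "\<And>u v. u \<in> ?Y \<Longrightarrow> v \<in> ?Y \<Longrightarrow> tree_dist x0 (r u) (r v) = tree_dist x0 u v"
    using R_tree_quotient_of_radial_segments[OF geod segs] by blast
  show ?thesis
  proof (intro exI conjI ballI)
    show "R_tree (r ` ?Y) (tree_dist x0)" by fact
    show "r ` ?Y \<subseteq> r ` ?Y" ..
    fix z x y assume "z \<in> Z" "x \<in> G z" "y \<in> G z"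
    then have "dist x y = \<bar>dist x0 x - dist x0 y\<bar>"
      using geodesic_segment_from_base_dist segs by blast
    then show "tree_dist x0 (r x) (r y) = dist x y"
      using r[of x y] tree_dist_radial[OF geod] \<open>z \<in> Z\<close> \<open>x \<in> G z\<close> \<open>y \<in> G z\<close> by auto
  next
    fix x y assume "x \<in> ?Y" "y \<in> ?Y"
    then show "dist x y - 2 * (\<Delta> + 2 * \<delta>) \<le> tree_dist x0 (r x) (r y)"
      and "tree_dist x0 (r x) (r y) \<le> dist x y"
      using r tree_dist_le_dist[OF geod] dist_le_tree_dist[OF geod hyp bneck] by simp_all
  qed
qed

end
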